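(* Consider the mass-action system in the concentrations $x_1,\dots,x_6$ with positive reaction rate constants $k_1,\dots,k_6$: \[ \begin{aligned} \dot x_1&=-k_1x_1+k_4x_3x_5, & \dot x_2&=k_1x_1-k_2x_2+k_5x_4x_5, & \dot x_3&=k_2x_2-k_3x_3-k_4x_3x_5,\\ \dot x_4&=k_3x_3-k_5x_4x_5, & \dot x_5&=-k_4x_3x_5-k_5x_4x_5+k_6x_6, & \dot x_6&=k_4x_3x_5+k_5x_4x_5-k_6x_6, \end{aligned} \] together with the conservation laws $x_1+x_2+x_3+x_4=T_1$, $x_5+x_6=T_2$, with $T_1,T_2>0$. Assume that a fixed choice of reaction rate constants satisfies $k_3>k_1$. Then $k_6\left(\frac{1}{k_2}+\frac{1}{k_3}\right)<k_6\left(\frac{1}{k_1}+\frac{1}{k_2}\right)$, and for any choice of total concentration constants $T_1,T_2>0$ verifying \[ k_6\left(\frac{1}{k_2}+\frac{1}{k_3}\right)<\frac{T_1}{T_2}<k_6\left(\frac{1}{k_1}+\frac{1}{k_2}\right), \] there exist positive constants $N_1,N_2$ such that for any values $\beta_4,\beta_5>0$ with $\beta_4>N_1$ and $\frac{\beta_5}{\beta_4}>N_2$, after replacing $k_4$ by $\overline{k_4}=\beta_4k_4$ and $k_5$ by $\overline{k_5}=\beta_5k_5$ (keeping $k_1,k_2,k_3,k_6,T_1,T_2$ unchanged), the system has at least three positive steady states, i.e. there are at least three points $x\in\mathbb R^6_{>0}$ with $\dot x_1=\dots=\dot x_6=0$, $x_1+x_2+x_3+x_4=T_1$ and $x_5+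x_6=T_2$.
   Context: This is the mass-action system of the chemical reaction network $X_1\xrightarrow{k_1}X_2\xrightarrow{k_2}X_3\xrightarrow{k_3}X_4$, $X_3+X_5\xrightarrow{k_4}X_1+X_6$, $X_4+X_5\xrightarrow{k_5}X_2+X_6$, $X_6\xrightarrow{k_6}X_5$ (a two-component system with hybrid histidine kinase); $x_i$ is the concentration of species $X_i$. A positive steady state is a point of $\mathbb R^6_{>0}$ where the right-hand sides vanish. *)

theory Defs
  imports "HOL-Analysis.Analysis"
begin

text \<open>Right-hand side of the mass-action system, with rate constants
  k1,...,k6 and concentrations x1,...,x6 (components 1..6 of x; in the type 6 the
  index 6 coincides with 0, so 1..6 enumerate all six coordinates).\<close>
definition hhk_rhs :: "real \<Rightarrow> real \<Rightarrow> real \<Rightarrow> real \<Rightarrow> real \<Rightarrow> real \<Rightarrow> real^6 \<Rightarrow> real^6" where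
  "hhk_rhs k1 k2 k3 k4 k5 k6 x =
     (let x1 = x$1; x2 = x$2; x3 = x$3; x4 = x$4; x5 = x$5; x6 = x$6 in
      (\<chi> i. if i = 1 then - k1*x1 + k4*x3*x5
             else if i = 2 then k1*x1 - k2*x2 + k5*x4*x5
             else if i = 3 then k2*x2 - k3*x3 - k4*x3*x5
             else if i = 4 then k3*x3 - k5*x4*x5
             else if i = 5 then - k4*x3*x5 - k5*x4*x5 + k6*x6
             else k4*x3*x5 + k5*x4*x5 - k6*x6))"

definition hhk_pos_steady_states ::
  "real \<Rightarrow> real \<Rightarrow> real \<Rightarrow> real \<Rightarrow> real \<Rightarrow> real \<Rightarrow> real \<Rightarrow> real \<Rightarrow> (real^6) set" where
  "hhk_pos_steady_states k1 k2 k3 k4 k5 k6 T1 T2 =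
     {x. (\<forall>i. x$i > 0) \<and> hhk_rhs k1 k2 k3 k4 k5 k6 x = 0
         \<and> x$1 + x$2 + x$3 + x$4 = T1 \<and> x$5 + x$6 = T2}"

end

theory Submission
  imports Defs
begin

text \<open>At a positive steady state all concentrations are determined by \<open>s = x\<^sub>5\<close>: the
  first four equations, \<open>x\<^sub>1 + x\<^sub>2 + x\<^sub>3 + x\<^sub>4 = T\<^sub>1\<close> and \<open>x\<^sub>6 = T\<^sub>2 - s\<close> fix the other
  coordinates, and the remaining balance \<open>k\<^sub>6 x\<^sub>6 = (k\<^sub>4 s + k\<^sub>3) x\<^sub>3\<close> becomes, after clearing
  denominators, the vanishing of a cubic in \<open>s\<close>; every root in \<open>(0, T\<^sub>2)\<close> yields a positive
  steady state. The cubic is negative at \<open>0\<close> and positive at \<open>T\<^sub>2\<close>. The upper bound on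
  \<open>T\<^sub>1/T\<^sub>2\<close> makes the coefficient of \<open>k\<^sub>4 s\<^sup>2\<close> negative on \<open>(0, d)\<close> for some \<open>d > 0\<close>, so
  for large \<open>k\<^sub>4\<close> the cubic is negative at \<open>d/2\<close>; the lower bound makes the coefficient
  of \<open>k\<^sub>3 s\<close> positive near \<open>0\<close>, and for large \<open>k\<^sub>5/k\<^sub>4\<close> this beats the other two terms at a
  suitable small \<open>s\<close>. These four sign changes give three roots.\<close>

definition steady_cubic ::
  "real \<Rightarrow> real \<Rightarrow> real \<Rightarrow> real \<Rightarrow> real \<Rightarrow> real \<Rightarrow> real \<Rightarrow> real \<Rightarrow> real \<Rightarrow> real" where
  "steady_cubic k1 k2 k3 k4 k5 k6 T1 T2 s =
     k4 * s^2 * (k6 * (1/k1 + 1/k2) * (s - T2) + T1)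
     + k3 * s * (k6 * (1/k2 + 1/k3) * (s - T2) + T1)
     + k3 * k6 * (s - T2) / k5"

lemma steady_state_of_steady_cubic_root:
  fixes k1 k2 k3 k4 k5 k6 T1 T2 s :: real
  assumes pos: "k1 > 0" "k2 > 0" "k3 > 0" "k4 > 0" "k5 > 0" "k6 > 0" "T1 > 0"
    and s: "0 < s" "s < T2" and root: "steady_cubic k1 k2 k3 k4 k5 k6 T1 T2 s = 0"
  shows "\<exists>x \<in> hhk_pos_steady_states k1 k2 k3 k4 k5 k6 T1 T2. x$5 = s"
proof -
  define P where "P = k4 * s^2 / k1 + (k3 + k4 * s) * s / k2 + s + k3 / k5"
  have "P > 0" unfolding P_def using pos s by (intro add_pos_pos divide_pos_pos mult_pos_pos) auto
  define x3 where "x3 = T1 * s / P"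
  define x :: "real^6" where "x = (\<chi> i.
     if i = 1 then k4 * x3 * s / k1 else if i = 2 then (k3 + k4 * s) * x3 / k2
     else if i = 3 then x3 else if i = 4 then k3 * x3 / (k5 * s)
     else if i = 5 then s else T2 - s)"
  have x: "x$1 = k4 * x3 * s / k1" "x$2 = (k3 + k4 * s) * x3 / k2" "x$3 = x3"
    "x$4 = k3 * x3 / (k5 * s)" "x$5 = s" "x$6 = T2 - s"
    unfolding x_def by simp_all
  have "x3 > 0" unfolding x3_def using \<open>P > 0\<close> pos s by simp
  then have "\<forall>i. x$i > 0" unfolding x_def using pos s by (simp add: add_pos_pos)
  have "(s - T2) * k6 * P + T1 * s * (k4 * s + k3) = steady_cubic k1 k2 k3 k4 k5 k6 T1 T2 s"
    unfolding P_def steady_cubic_def using pos by (simp add: field_simps power2_eq_square)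
  then have "(k4 * s + k3) * x3 = k6 * (T2 - s)"
    using root \<open>P > 0\<close> unfolding x3_def by (simp add: field_simps)
  then have "hhk_rhs k1 k2 k3 k4 k5 k6 x = 0"
    unfolding hhk_rhs_def Let_def x using pos s by (simp add: vec_eq_iff field_simps)
  moreover have "x$1 + x$2 + x$3 + x$4 = T1"
  proof -
    have "x$1 + x$2 + x$3 + x$4 = x3 * P / s"
      unfolding x P_def using pos s by (simp add: field_simps power2_eq_square)
    then show ?thesis unfolding x3_def using \<open>P > 0\<close> s by simp
  qed
  ultimately have "x \<in> hhk_pos_steady_states k1 k2 k3 k4 k5 k6 T1 T2"
    unfolding hhk_pos_steady_states_def using \<open>\<forall>i. x$i > 0\<close> x by simp
  then show ?thesis using x by blast
qed

lemma sign_change_root: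
  fixes f :: "real \<Rightarrow> real"
  assumes "continuous_on {a..b} f" "a < b" "f a * f b < 0"
  shows "\<exists>x. a < x \<and> x < b \<and> f x = 0"
proof -
  have "f a < 0 \<and> 0 < f b \<or> f b < 0 \<and> 0 < f a"
    using assms(3) by (auto simp: mult_less_0_iff)
  then obtain x where "a \<le> x" "x \<le> b" "f x = 0"
    using IVT'[of f a 0 b] IVT2'[of f b 0 a] assms(1,2) by force
  moreover have "x \<noteq> a" "x \<noteq> b" using assms(3) \<open>f x = 0\<close> by auto
  ultimately show ?thesis by force
qed

lemma steady_cubic_neg_at_0:
  assumes "k3 > 0" "k5 > 0" "k6 > 0" "T2 > 0"
  shows "steady_cubic k1 k2 k3 k4 k5 k6 T1 T2 0 < 0"
  using assms by (simp add: steady_cubic_def divide_neg_pos mult_pos_neg)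

lemma steady_cubic_pos_at_T2:
  assumes "k3 > 0" "k4 > 0" "T1 > 0" "T2 > 0"
  shows "steady_cubic k1 k2 k3 k4 k5 k6 T1 T2 T2 > 0"
  using assms by (simp add: steady_cubic_def add_pos_pos)

lemma steady_cubic_neg_at_half_gap:
  fixes k1 k2 k3 k4 k5 k6 T1 T2 :: real
  defines "L \<equiv> 1/k1 + 1/k2"
  defines "d \<equiv> T2 - T1 / (k6 * L)"
  assumes pos: "k1 > 0" "k2 > 0" "k3 > 0" "k4 > 0" "k5 > 0" "k6 > 0" "T1 > 0"
    and "d > 0" and k4_large: "k4 \<ge> 4 * k3 * T1 / (k6 * L * d^2)"
  shows "steady_cubic k1 k2 k3 k4 k5 k6 T1 T2 (d/2) < 0"
proof -
  define b where "b = d/2"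
  have "L > 0" unfolding L_def using pos by (simp add: add_pos_pos)
  have "T1 / (k6 * L) > 0" using \<open>L > 0\<close> pos by simp
  then have "b > 0" "b < T2" using \<open>d > 0\<close> unfolding b_def d_def by simp_all
  have leading: "k6 * L * (b - T2) + T1 = - k6 * L * d / 2"
    using \<open>L > 0\<close> pos unfolding b_def d_def by (simp add: field_simps)
  have "k6 * (1/k2 + 1/k3) * (b - T2) \<le> 0"
    using \<open>b < T2\<close> pos by (simp add: mult_nonneg_nonpos add_pos_pos)
  then have "k3 * b * (k6 * (1/k2 + 1/k3) * (b - T2) + T1) \<le> k3 * b * T1"
    using \<open>b > 0\<close> pos by (intro mult_left_mono) auto
  moreover have "k3 * k6 * (b - T2) / k5 < 0"
    using \<open>b < T2\<close> pos by (simp add: divide_neg_pos mult_pos_neg)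
  ultimately have "steady_cubic k1 k2 k3 k4 k5 k6 T1 T2 b < k4 * b^2 * (- k6 * L * d / 2) + k3 * b * T1"
    unfolding steady_cubic_def L_def[symmetric] leading by linarith
  also have "\<dots> = b * (k3 * T1 - k4 * k6 * L * d^2 / 4)"
    unfolding b_def by (simp add: field_simps power2_eq_square)
  also have "\<dots> \<le> 0"
    using k4_large \<open>b > 0\<close> \<open>d > 0\<close> \<open>L > 0\<close> pos by (simp add: mult_nonneg_nonpos field_simps)
  finally show ?thesis unfolding b_def .
qed

lemma steady_cubic_pos_near_0:
  fixes k1 k2 k3 k4 k5 k6 T1 T2 :: real
  defines "L \<equiv> 1/k1 + 1/k2" and "M \<equiv> 1/k2 + 1/k3"
  defines "e \<equiv> T1 - k6 * M * T2"
  defines "a \<equiv> k3 * e / (3 * k4 * k6 * L * T2)"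
  assumes pos: "k1 > 0" "k2 > 0" "k3 > 0" "k4 > 0" "k5 > 0" "k6 > 0" "T2 > 0"
    and "e > 0" "a < T2" and k5_large: "k5 / k4 > 9 * k6^2 * L * T2^2 / (2 * k3 * e^2)"
  shows "steady_cubic k1 k2 k3 k4 k5 k6 T1 T2 a > 0"
proof -
  have "L > 0" "M > 0" unfolding L_def M_def using pos by (simp_all add: add_pos_pos)
  then have "k6 * M * T2 > 0" using pos by simp
  then have "T1 > 0" using \<open>e > 0\<close> unfolding e_def by linarith
  have "a > 0" unfolding a_def using \<open>e > 0\<close> \<open>L > 0\<close> pos by simp
  then have "k6 * L * a > 0" using \<open>L > 0\<close> pos by simp
  then have "k4 * a^2 * (k6 * L * (a - T2) + T1) \<ge> k4 * a^2 * (- k6 * L * T2)"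
    using \<open>T1 > 0\<close> pos by (intro mult_left_mono) (auto simp: algebra_simps)
  moreover have "k3 * a * (k6 * M * (a - T2) + T1) \<ge> k3 * a * e"
    using \<open>a > 0\<close> \<open>M > 0\<close> pos unfolding e_def
    by (intro mult_left_mono) (auto simp: algebra_simps)
  moreover have "k3 * k6 * (a - T2) / k5 \<ge> - k3 * k6 * T2 / k5"
    using \<open>a > 0\<close> pos by (intro divide_right_mono) (auto simp: algebra_simps)
  ultimately have "steady_cubic k1 k2 k3 k4 k5 k6 T1 T2 a
      \<ge> k4 * a^2 * (- k6 * L * T2) + k3 * a * e - k3 * k6 * T2 / k5"
    unfolding steady_cubic_def L_def[symmetric] M_def[symmetric] by simp
  also have "k4 * a^2 * (- k6 * L * T2) = - k3 * a * e / 3"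
    unfolding a_def using \<open>L > 0\<close> pos by (simp add: field_simps power2_eq_square)
  finally have "steady_cubic k1 k2 k3 k4 k5 k6 T1 T2 a \<ge> k3 * (2/3 * a * e - k6 * T2 / k5)"
    by (simp add: algebra_simps)
  moreover have "k6 * T2 / k5 < 2/3 * a * e"
  proof -
    have "9 * k6^2 * L * T2^2 * k4 < k5 * (2 * k3 * e^2)"
      using k5_large pos \<open>e > 0\<close> \<open>L > 0\<close> by (simp add: field_simps)
    then show ?thesis
      unfolding a_def using pos \<open>e > 0\<close> \<open>L > 0\<close> by (simp add: field_simps power2_eq_square)
  qed
  then have "k3 * (2/3 * a * e - k6 * T2 / k5) > 0" using pos by simp
  ultimately show ?thesis by linarith
qed

lemma steady_cubic_three_roots:
  fixes k1 k2 k3 k4 k5 k6 T1 T2 :: real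
  defines "L \<equiv> 1/k1 + 1/k2" and "M \<equiv> 1/k2 + 1/k3"
  defines "d \<equiv> T2 - T1 / (k6 * L)" and "e \<equiv> T1 - k6 * M * T2"
  assumes pos: "k1 > 0" "k2 > 0" "k3 > 0" "k4 > 0" "k5 > 0" "k6 > 0" "T1 > 0" "T2 > 0"
    and "d > 0" "e > 0"
    and k4_large: "k4 \<ge> 4 * k3 * T1 / (k6 * L * d^2)" "k4 > 2 * k3 * e / (3 * k6 * L * T2 * d)"
    and k5_large: "k5 / k4 > 9 * k6^2 * L * T2^2 / (2 * k3 * e^2)"
  shows "\<exists>s1 s2 s3. 0 < s1 \<and> s1 < s2 \<and> s2 < s3 \<and> s3 < T2 \<and>
    steady_cubic k1 k2 k3 k4 k5 k6 T1 T2 s1 = 0 \<and> steady_cubic k1 k2 k3 k4 k5 k6 T1 T2 s2 = 0 \<and>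
    steady_cubic k1 k2 k3 k4 k5 k6 T1 T2 s3 = 0"
proof -
  define H where "H = steady_cubic k1 k2 k3 k4 k5 k6 T1 T2"
  define a where "a = k3 * e / (3 * k4 * k6 * L * T2)"
  have "L > 0" unfolding L_def using pos by (simp add: add_pos_pos)
  have "a > 0" unfolding a_def using \<open>e > 0\<close> \<open>L > 0\<close> pos by simp
  have "a < d/2"
    using k4_large(2) \<open>d > 0\<close> \<open>L > 0\<close> pos unfolding a_def by (simp add: field_simps)
  have "T1 / (k6 * L) > 0" using \<open>L > 0\<close> pos by simp
  then have "d/2 < T2" using \<open>d > 0\<close> unfolding d_def by simp
  have "H 0 < 0" "H T2 > 0"
    unfolding H_def using pos by (simp_all add: steady_cubic_neg_at_0 steady_cubic_pos_at_T2)
  moreover have "H a > 0"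
    unfolding H_def using steady_cubic_pos_near_0 pos \<open>e > 0\<close> \<open>a < d/2\<close> \<open>d/2 < T2\<close> k5_large
    unfolding a_def e_def M_def L_def by simp
  moreover have "H (d/2) < 0"
    unfolding H_def using steady_cubic_neg_at_half_gap pos \<open>d > 0\<close> k4_large(1)
    unfolding d_def L_def by simp
  moreover have "continuous_on {lo..hi} H" for lo hi
    unfolding H_def steady_cubic_def by (intro continuous_intros) (use pos in auto)
  ultimately obtain s1 s2 s3 where
    "0 < s1" "s1 < a" "H s1 = 0" "a < s2" "s2 < d/2" "H s2 = 0" "d/2 < s3" "s3 < T2" "H s3 = 0"
    using sign_change_root[of 0 a H] sign_change_root[of a "d/2" H] sign_change_root[of "d/2" T2 H]
      \<open>a > 0\<close> \<open>a < d/2\<close> \<open>d/2 < T2\<close> by (metis mult_pos_neg mult_neg_pos)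
  then show ?thesis unfolding H_def by (meson order.strict_trans)
qed

lemma three_pos_steady_states_of_roots:
  fixes k1 k2 k3 k4 k5 k6 T1 T2 :: real
  assumes pos: "k1 > 0" "k2 > 0" "k3 > 0" "k4 > 0" "k5 > 0" "k6 > 0" "T1 > 0"
    and s: "0 < s1" "s1 < s2" "s2 < s3" "s3 < T2"
    and roots: "steady_cubic k1 k2 k3 k4 k5 k6 T1 T2 s1 = 0"
      "steady_cubic k1 k2 k3 k4 k5 k6 T1 T2 s2 = 0" "steady_cubic k1 k2 k3 k4 k5 k6 T1 T2 s3 = 0"
  shows "\<exists>S. finite S \<and> card S \<ge> 3 \<and> S \<subseteq> hhk_pos_steady_states k1 k2 k3 k4 k5 k6 T1 T2"
proof -
  obtain p1 p2 p3 where p: "p1 \<in> hhk_pos_steady_states k1 k2 k3 k4 k5 k6 T1 T2" "p1$5 = s1"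
    "p2 \<in> hhk_pos_steady_states k1 k2 k3 k4 k5 k6 T1 T2" "p2$5 = s2"
    "p3 \<in> hhk_pos_steady_states k1 k2 k3 k4 k5 k6 T1 T2" "p3$5 = s3"
    using steady_state_of_steady_cubic_root[OF pos] s roots by (meson order.strict_trans)
  then have "p1 \<noteq> p2" "p1 \<noteq> p3" "p2 \<noteq> p3" using s by auto
  then have "card {p1, p2, p3} = 3" by simp
  then show ?thesis using p by (intro exI[of _ "{p1, p2, p3}"]) auto
qed

lemma three_pos_steady_states_for_large_rates:
  fixes k1 k2 k3 k6 T1 T2 :: real
  assumes pos: "k1 > 0" "k2 > 0" "k3 > 0" "k6 > 0" "T1 > 0" "T2 > 0"
    and ratio: "k6 * (1/k2 + 1/k3) < T1 / T2" "T1 / T2 < k6 * (1/k1 + 1/k2)"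
  shows "\<exists>N1 N2. N1 > 0 \<and> N2 > 0 \<and> (\<forall>k4 k5. k4 > N1 \<longrightarrow> k5 > 0 \<longrightarrow> k5 / k4 > N2 \<longrightarrow>
    (\<exists>S. finite S \<and> card S \<ge> 3 \<and> S \<subseteq> hhk_pos_steady_states k1 k2 k3 k4 k5 k6 T1 T2))"
proof -
  define L where "L = 1/k1 + 1/k2"
  define M where "M = 1/k2 + 1/k3"
  define d where "d = T2 - T1 / (k6 * L)"
  define e where "e = T1 - k6 * M * T2"
  have "L > 0" unfolding L_def using pos by (simp add: add_pos_pos)
  have "d > 0" using ratio(2) \<open>L > 0\<close> pos unfolding d_def L_def[symmetric] by (simp add: field_simps)
  have "e > 0" using ratio(1) pos unfolding e_def M_def[symmetric] by (simp add: field_simps)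
  define N1 where "N1 = 4 * k3 * T1 / (k6 * L * d^2) + 2 * k3 * e / (3 * k6 * L * T2 * d)"
  define N2 where "N2 = 9 * k6^2 * L * T2^2 / (2 * k3 * e^2)"
  have "N1 > 0" "N2 > 0"
    unfolding N1_def N2_def using pos \<open>L > 0\<close> \<open>d > 0\<close> \<open>e > 0\<close> by (simp_all add: add_pos_pos)
  moreover have "\<exists>S. finite S \<and> card S \<ge> 3 \<and> S \<subseteq> hhk_pos_steady_states k1 k2 k3 k4 k5 k6 T1 T2"
    if "k4 > N1" "k5 > 0" "k5 / k4 > N2" for k4 k5
  proof -
    have "4 * k3 * T1 / (k6 * L * d^2) > 0" "2 * k3 * e / (3 * k6 * L * T2 * d) > 0"
      using pos \<open>L > 0\<close> \<open>d > 0\<close> \<open>e > 0\<close> by simp_all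
    then have "k4 \<ge> 4 * k3 * T1 / (k6 * L * d^2)" "k4 > 2 * k3 * e / (3 * k6 * L * T2 * d)"
      using \<open>k4 > N1\<close> unfolding N1_def by linarith+
    moreover have "k4 > 0" "k5 / k4 > 9 * k6^2 * L * T2^2 / (2 * k3 * e^2)"
      using that \<open>N1 > 0\<close> unfolding N2_def by simp_all
    ultimately obtain s1 s2 s3 where s: "0 < s1" "s1 < s2" "s2 < s3" "s3 < T2"
      and roots: "steady_cubic k1 k2 k3 k4 k5 k6 T1 T2 s1 = 0"
        "steady_cubic k1 k2 k3 k4 k5 k6 T1 T2 s2 = 0" "steady_cubic k1 k2 k3 k4 k5 k6 T1 T2 s3 = 0"
      using steady_cubic_three_roots[of k1 k2 k3 k4 k5 k6 T1 T2] pos \<open>k5 > 0\<close> \<open>d > 0\<close> \<open>e > 0\<close>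
      unfolding d_def e_def L_def M_def by blast
    show ?thesis
      by (rule three_pos_steady_states_of_roots[OF pos(1-3) \<open>k4 > 0\<close> \<open>k5 > 0\<close> pos(4,5) s roots])
  qed
  ultimately show ?thesis by blast
qed

theorem theorem1p1:
  fixes k1 k2 k3 k4 k5 k6 :: real
  assumes "k1 > 0" "k2 > 0" "k3 > 0" "k4 > 0" "k5 > 0" "k6 > 0"
    and "k3 > k1"
  shows "k6 * (1/k2 + 1/k3) < k6 * (1/k1 + 1/k2) \<and>
    (\<forall>T1 T2 :: real. T1 > 0 \<longrightarrow> T2 > 0 \<longrightarrow>
       k6 * (1/k2 + 1/k3) < T1 / T2 \<longrightarrow> T1 / T2 < k6 * (1/k1 + 1/k2) \<longrightarrow>
       (\<exists>N1 N2 :: real. N1 > 0 \<and> N2 > 0 \<and>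
          (\<forall>\<beta>4 \<beta>5 :: real. \<beta>4 > 0 \<longrightarrow> \<beta>5 > 0 \<longrightarrow> \<beta>4 > N1 \<longrightarrow> \<beta>5 / \<beta>4 > N2 \<longrightarrow>
             (\<exists>S. finite S \<and> card S \<ge> 3 \<and>
                S \<subseteq> hhk_pos_steady_states k1 k2 k3 (\<beta>4 * k4) (\<beta>5 * k5) k6 T1 T2))))"
proof (intro conjI allI impI)
  show "k6 * (1/k2 + 1/k3) < k6 * (1/k1 + 1/k2)"
    using assms by (simp add: frac_less2)
  fix T1 T2 :: real
  assume "T1 > 0" "T2 > 0" "k6 * (1/k2 + 1/k3) < T1 / T2" "T1 / T2 < k6 * (1/k1 + 1/k2)"
  then obtain N1 N2 where N: "N1 > 0" "N2 > 0" and three: "\<forall>K4 K5. K4 > N1 \<longrightarrow> K5 > 0 \<longrightarrow>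
      K5 / K4 > N2 \<longrightarrow> (\<exists>S. finite S \<and> card S \<ge> 3 \<and> S \<subseteq> hhk_pos_steady_states k1 k2 k3 K4 K5 k6 T1 T2)"
    using three_pos_steady_states_for_large_rates[of k1 k2 k3 k6 T1 T2] assms by blast
  show "\<exists>N1 N2 :: real. N1 > 0 \<and> N2 > 0 \<and>
          (\<forall>\<beta>4 \<beta>5 :: real. \<beta>4 > 0 \<longrightarrow> \<beta>5 > 0 \<longrightarrow> \<beta>4 > N1 \<longrightarrow> \<beta>5 / \<beta>4 > N2 \<longrightarrow>
             (\<exists>S. finite S \<and> card S \<ge> 3 \<and>
                S \<subseteq> hhk_pos_steady_states k1 k2 k3 (\<beta>4 * k4) (\<beta>5 * k5) k6 T1 T2))"
  proof (rule exI[of _ "N1 / k4"], rule exI[of _ "N2 * k4 / k5"], intro conjI allI impI)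
    show "N1 / k4 > 0" "N2 * k4 / k5 > 0" using N assms by simp_all
    fix \<beta>4 \<beta>5 :: real
    assume "\<beta>4 > 0" "\<beta>5 > 0" "\<beta>4 > N1 / k4" "\<beta>5 / \<beta>4 > N2 * k4 / k5"
    have "\<beta>4 * k4 > N1" using \<open>\<beta>4 > N1 / k4\<close> assms by (simp add: divide_less_eq)
    have "(\<beta>5 * k5) / (\<beta>4 * k4) = (\<beta>5 / \<beta>4) * (k5 / k4)" by simp
    also have "\<dots> > (N2 * k4 / k5) * (k5 / k4)"
      using \<open>\<beta>5 / \<beta>4 > N2 * k4 / k5\<close> assms by (intro mult_strict_right_mono) auto
    also have "(N2 * k4 / k5) * (k5 / k4) = N2" using assms by simp
    finally show "\<exists>S. finite S \<and> card S \<ge> 3 \<and>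
        S \<subseteq> hhk_pos_steady_states k1 k2 k3 (\<beta>4 * k4) (\<beta>5 * k5) k6 T1 T2"
      using three \<open>\<beta>4 * k4 > N1\<close> \<open>\<beta>5 > 0\<close> assms by simp
  qed
qed

end
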